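(* Let $X$ be a compactum, let $n\geq2$, and let $f:X\to X$ be a function. Consider the statements: (1) $f$ is $TT_{++}$; (2) $F_n(f)$ is $TT_{++}$; (3) $SF_n(f)$ is $TT_{++}$. Then (2) and (3) are equivalent and (2) implies (1). Moreover, (1) does not imply (2) in general: there exist such $X$, $n$, $f$ with $f$ being $TT_{++}$ but $F_n(f)$ not $TT_{++}$.
   Context: A compactum is a nondegenerate compact, perfect, Hausdorff topological space. $F_n(X)$ is the set of nonempty subsets of $X$ with at most $n$ points, with the Vietoris topology; $F_1(X)=\{\{x\}:x\in X\}$; $F_n(f)(A)=f(A)$. $SF_n(X)=F_n(X)/F_1(X)$ is the quotient collapsing $F_1(X)$ to a point, $q$ the quotient map, $F_X=q(F_1(X))$, and $SF_n(f)(\chi)=q(F_n(f)(q^{-1}(\chi)))$ for $\chi\neq F_X$, $SF_n(f)(F_X)=F_X$. A function $g:Z\to Z$ is $TT_{++}$ if for every pair of nonempty open $U,V\subseteq Z$ the set $\{k\in\mathbb{N}: U\cap g^{-k}(V)\neq\emptyset\}$ is infinite. *)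

theory Defs
  imports "HOL-Analysis.Analysis"
begin

definition compactum :: "'a topology \<Rightarrow> bool" where
  "compactum X \<longleftrightarrow> compact_space X \<and> Hausdorff_space X \<and>
     (\<forall>x\<in>topspace X. \<not> openin X {x}) \<and> (\<exists>x\<in>topspace X. \<exists>y\<in>topspace X. x \<noteq> y)"

definition TTpp :: "'a topology \<Rightarrow> ('a \<Rightarrow> 'a) \<Rightarrow> bool" where
  "TTpp Z g \<longleftrightarrow> (\<forall>U V. openin Z U \<longrightarrow> openin Z V \<longrightarrow> U \<noteq> {} \<longrightarrow> V \<noteq> {} \<longrightarrow>
      infinite {k::nat. U \<inter> {x \<in> topspace Z. (g ^^ k) x \<in> V} \<noteq> {}})"

definition Fn_set :: "'a topology \<Rightarrow> nat \<Rightarrow> 'a set set" where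
  "Fn_set X n = {A. A \<subseteq> topspace X \<and> A \<noteq> {} \<and> finite A \<and> card A \<le> n}"

definition Fn :: "'a topology \<Rightarrow> nat \<Rightarrow> 'a set topology" where
  "Fn X n = topology_generated_by
     ({{A \<in> Fn_set X n. A \<subseteq> U} | U. openin X U} \<union>
      {{A \<in> Fn_set X n. A \<inter> U \<noteq> {}} | U. openin X U})"

definition Fn_map :: "('a \<Rightarrow> 'a) \<Rightarrow> 'a set \<Rightarrow> 'a set" where
  "Fn_map f A = f ` A"

text \<open>F_1(X), which is also the collapsed point F_X of SF_n(X).\<close>
definition F1_set :: "'a topology \<Rightarrow> 'a set set" where
  "F1_set X = {{x} | x. x \<in> topspace X}"

text \<open>Quotient map: points of SF_n(X) are the equivalence classes.\<close>
definition SFq :: "'a topology \<Rightarrow> 'a set \<Rightarrow> 'a set set" where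
  "SFq X A = (if A \<in> F1_set X then F1_set X else {A})"

definition SFn :: "'a topology \<Rightarrow> nat \<Rightarrow> 'a set set topology" where
  "SFn X n = topology (\<lambda>W. W \<subseteq> SFq X ` topspace (Fn X n) \<and>
                         openin (Fn X n) {A \<in> topspace (Fn X n). SFq X A \<in> W})"

definition SFn_map :: "'a topology \<Rightarrow> ('a \<Rightarrow> 'a) \<Rightarrow> 'a set set \<Rightarrow> 'a set set" where
  "SFn_map X f c = (if c = F1_set X then F1_set X
                     else SFq X (Fn_map f (the_elem c)))"

lemma istopology_SFn:
  "istopology (\<lambda>W. W \<subseteq> SFq X ` topspace (Fn X n) \<and>
                   openin (Fn X n) {A \<in> topspace (Fn X n). SFq X A \<in> W})"
  unfolding istopology_def
proof (rule conjI; intro allI impI)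
  fix S T assume S: "S \<subseteq> SFq X ` topspace (Fn X n) \<and> openin (Fn X n) {A \<in> topspace (Fn X n). SFq X A \<in> S}"
    and T: "T \<subseteq> SFq X ` topspace (Fn X n) \<and> openin (Fn X n) {A \<in> topspace (Fn X n). SFq X A \<in> T}"
  have eq: "{A \<in> topspace (Fn X n). SFq X A \<in> S \<inter> T} =
     {A \<in> topspace (Fn X n). SFq X A \<in> S} \<inter> {A \<in> topspace (Fn X n). SFq X A \<in> T}" by blast
  show "S \<inter> T \<subseteq> SFq X ` topspace (Fn X n) \<and>
     openin (Fn X n) {A \<in> topspace (Fn X n). SFq X A \<in> S \<inter> T}"
  proof
    show "S \<inter> T \<subseteq> SFq X ` topspace (Fn X n)" using S by blast
    show "openin (Fn X n) {A \<in> topspace (Fn X n). SFq X A \<in> S \<inter> T}"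
      unfolding eq using S T by (intro openin_Int) blast+
  qed
next
  fix K assume K: "\<forall>W\<in>K. W \<subseteq> SFq X ` topspace (Fn X n) \<and>
      openin (Fn X n) {A \<in> topspace (Fn X n). SFq X A \<in> W}"
  have eq: "{A \<in> topspace (Fn X n). SFq X A \<in> \<Union>K} =
      \<Union>((\<lambda>W. {A \<in> topspace (Fn X n). SFq X A \<in> W}) ` K)" by blast
  show "\<Union>K \<subseteq> SFq X ` topspace (Fn X n) \<and>
     openin (Fn X n) {A \<in> topspace (Fn X n). SFq X A \<in> \<Union>K}"
  proof
    show "\<Union>K \<subseteq> SFq X ` topspace (Fn X n)" using K by blast
    show "openin (Fn X n) {A \<in> topspace (Fn X n). SFq X A \<in> \<Union>K}"
      unfolding eq using K by (intro openin_Union) blast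
  qed
qed

end

theory Submission
  imports Defs
begin

text \<open>
  Testing TT++ of F_n(f) on the open sets of subsets of U and of subsets of V gives TT++ of f.
  The quotient map q : F_n(X) -> SF_n(X) is continuous, onto, and semiconjugates F_n(f) to
  SF_n(f), so TT++ passes from F_n(f) to SF_n(f). Conversely, for X Hausdorff and perfect,
  F_1(X) is closed and contains no nonempty open subset of F_n(X), and q is injective off
  F_1(X); hence every nonempty open subset of F_n(X) contains the preimage of a nonempty open
  subset of SF_n(X), and TT++ lifts back along q.

  For the counterexample take the irrational rotation x |-> frac (x + theta) of [0,1]. It is
  TT++ by Kronecker's theorem, but it preserves a - b modulo 1, so no iterate carries a set
  meeting both (1/5, 3/10) and (7/10, 4/5) into (2/5, 3/5).
\<close>

section \<open>Transfer of TT++ along semiconjugacies\<close>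

lemma funpow_in_closed:
  assumes "f ` S \<subseteq> S" and "x \<in> S"
  shows "(f ^^ k) x \<in> S"
  by (induction k) (use assms in auto)

lemma funpow_semiconj:
  assumes "f ` S \<subseteq> S" and "\<forall>x\<in>S. q (f x) = g (q x)" and "x \<in> S"
  shows "q ((f ^^ k) x) = (g ^^ k) (q x)"
  by (induction k) (use assms funpow_in_closed[of f S] in auto)

lemma TTpp_factor:
  assumes q: "continuous_map Z W q" "q ` topspace Z = topspace W"
    and f: "f ` topspace Z \<subseteq> topspace Z"
    and comm: "\<forall>x\<in>topspace Z. q (f x) = g (q x)"
    and TT: "TTpp Z f"
  shows "TTpp W g"
  unfolding TTpp_def
proof (intro allI impI)
  fix U V assume U: "openin W U" and V: "openin W V" and ne: "U \<noteq> {}" "V \<noteq> {}"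
  let ?pre = "\<lambda>S. {x \<in> topspace Z. q x \<in> S}"
  have "openin Z (?pre U)" "openin Z (?pre V)"
    using q(1) U V by (auto simp: continuous_map_def)
  moreover have "?pre S \<noteq> {}" if "S \<subseteq> topspace W" "S \<noteq> {}" for S
    using that by (auto simp flip: q(2))
  then have "?pre U \<noteq> {}" "?pre V \<noteq> {}"
    using ne openin_subset[OF U] openin_subset[OF V] by blast+
  ultimately have "infinite {k. ?pre U \<inter> {x \<in> topspace Z. (f ^^ k) x \<in> ?pre V} \<noteq> {}}"
    using TT unfolding TTpp_def by blast
  moreover have "{k. ?pre U \<inter> {x \<in> topspace Z. (f ^^ k) x \<in> ?pre V} \<noteq> {}}
      \<subseteq> {k. U \<inter> {y \<in> topspace W. (g ^^ k) y \<in> V} \<noteq> {}}"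
  proof
    fix k assume "k \<in> {k. ?pre U \<inter> {x \<in> topspace Z. (f ^^ k) x \<in> ?pre V} \<noteq> {}}"
    then obtain x where x: "x \<in> topspace Z" "q x \<in> U" "q ((f ^^ k) x) \<in> V" by blast
    then have "q x \<in> U \<inter> {y \<in> topspace W. (g ^^ k) y \<in> V}"
      using q(2) funpow_semiconj[OF f comm x(1)] by auto
    then show "k \<in> {k. U \<inter> {y \<in> topspace W. (g ^^ k) y \<in> V} \<noteq> {}}" by blast
  qed
  ultimately show "infinite {k. U \<inter> {y \<in> topspace W. (g ^^ k) y \<in> V} \<noteq> {}}"
    by (rule infinite_super[rotated])
qed

lemma TTpp_lift:
  assumes q: "topspace W \<subseteq> q ` topspace Z"
    and f: "f ` topspace Z \<subseteq> topspace Z"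
    and comm: "\<forall>x\<in>topspace Z. q (f x) = g (q x)"
    and small_preimage: "\<And>U. openin Z U \<Longrightarrow> U \<noteq> {} \<Longrightarrow>
          \<exists>V. openin W V \<and> V \<noteq> {} \<and> {x \<in> topspace Z. q x \<in> V} \<subseteq> U"
    and TT: "TTpp W g"
  shows "TTpp Z f"
  unfolding TTpp_def
proof (intro allI impI)
  fix U1 U2 assume U: "openin Z U1" "openin Z U2" and ne: "U1 \<noteq> {}" "U2 \<noteq> {}"
  obtain V1 V2 where V: "openin W V1" "V1 \<noteq> {}" "{x \<in> topspace Z. q x \<in> V1} \<subseteq> U1"
    "openin W V2" "V2 \<noteq> {}" "{x \<in> topspace Z. q x \<in> V2} \<subseteq> U2"
    using small_preimage U ne by meson
  then have "infinite {k. V1 \<inter> {y \<in> topspace W. (g ^^ k) y \<in> V2} \<noteq> {}}"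
    using TT unfolding TTpp_def by blast
  moreover have "{k. V1 \<inter> {y \<in> topspace W. (g ^^ k) y \<in> V2} \<noteq> {}}
      \<subseteq> {k. U1 \<inter> {x \<in> topspace Z. (f ^^ k) x \<in> U2} \<noteq> {}}"
  proof
    fix k assume "k \<in> {k. V1 \<inter> {y \<in> topspace W. (g ^^ k) y \<in> V2} \<noteq> {}}"
    then obtain y where y: "y \<in> V1" "y \<in> topspace W" "(g ^^ k) y \<in> V2" by blast
    then obtain x where x: "x \<in> topspace Z" "y = q x" using q by blast
    have "(f ^^ k) x \<in> topspace Z" "q ((f ^^ k) x) = (g ^^ k) y"
      using funpow_in_closed[OF f x(1)] funpow_semiconj[OF f comm x(1)] x(2) by simp_all
    then have "(f ^^ k) x \<in> U2" using V(6) y(3) by auto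
    moreover have "x \<in> U1" using V(3) x y(1) by blast
    ultimately show "k \<in> {k. U1 \<inter> {x \<in> topspace Z. (f ^^ k) x \<in> U2} \<noteq> {}}"
      using x(1) by blast
  qed
  ultimately show "infinite {k. U1 \<inter> {x \<in> topspace Z. (f ^^ k) x \<in> U2} \<noteq> {}}"
    by (rule infinite_super[rotated])
qed

section \<open>The Vietoris topology on \<open>F\<^sub>n(X)\<close>\<close>

definition Vietoris_subbasis :: "'a topology \<Rightarrow> nat \<Rightarrow> 'a set set set" where
  "Vietoris_subbasis X n =
     {{A \<in> Fn_set X n. A \<subseteq> U} | U. openin X U} \<union> {{A \<in> Fn_set X n. A \<inter> U \<noteq> {}} | U. openin X U}"

lemma Fn_eq_generated: "Fn X n = topology_generated_by (Vietoris_subbasis X n)"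
  unfolding Fn_def Vietoris_subbasis_def ..

lemma topspace_Fn: "topspace (Fn X n) = Fn_set X n"
proof -
  have "Fn_set X n \<in> Vietoris_subbasis X n"
    unfolding Vietoris_subbasis_def by (auto intro!: exI[of _ "topspace X"] simp: Fn_set_def)
  moreover have "\<Union>(Vietoris_subbasis X n) \<subseteq> Fn_set X n"
    unfolding Vietoris_subbasis_def by auto
  ultimately show ?thesis
    unfolding Fn_eq_generated by auto
qed

lemma openin_Fn_subset: "openin X U \<Longrightarrow> openin (Fn X n) {A \<in> Fn_set X n. A \<subseteq> U}"
  unfolding Fn_eq_generated
  by (rule topology_generated_by_Basis) (auto simp: Vietoris_subbasis_def)

lemma openin_Fn_meets: "openin X U \<Longrightarrow> openin (Fn X n) {A \<in> Fn_set X n. A \<inter> U \<noteq> {}}"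
  unfolding Fn_eq_generated
  by (rule topology_generated_by_Basis) (auto simp: Vietoris_subbasis_def)

lemma Fn_map_funpow: "(Fn_map f ^^ k) A = (f ^^ k) ` A"
  by (induction k) (simp_all add: Fn_map_def image_image)

lemma Fn_map_Fn_set:
  assumes "f ` topspace X \<subseteq> topspace X"
  shows "Fn_map f ` Fn_set X n \<subseteq> Fn_set X n"
proof (rule image_subsetI)
  fix A assume A: "A \<in> Fn_set X n"
  then have "card (f ` A) \<le> n" unfolding Fn_set_def using card_image_le le_trans by blast
  then show "Fn_map f A \<in> Fn_set X n"
    using A assms unfolding Fn_set_def Fn_map_def by auto
qed

lemma singleton_in_Fn_set: "x \<in> topspace X \<Longrightarrow> n \<ge> 1 \<Longrightarrow> {x} \<in> Fn_set X n"
  unfolding Fn_set_def by auto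

lemma doubleton_in_Fn_set:
  assumes "x \<in> topspace X" "y \<in> topspace X" "n \<ge> 2"
  shows "{x, y} \<in> Fn_set X n"
proof -
  have "card {x, y} \<le> 2" by (simp add: card_insert_if)
  then show ?thesis using assms unfolding Fn_set_def by auto
qed

lemma openin_Fn_contains_doubletons:
  assumes U: "openin (Fn X n) U" and n: "n \<ge> 2" and x: "x \<in> topspace X" "{x} \<in> U"
  shows "\<exists>N. openin X N \<and> x \<in> N \<and> (\<forall>y\<in>N. {x, y} \<in> U)"
proof -
  have "generate_topology_on (Vietoris_subbasis X n) U"
    using U unfolding Fn_eq_generated openin_topology_generated_by_iff .
  then show ?thesis
    using x
  proof (induction rule: generate_topology_on.induct)
    case Empty
    then show ?case by simp
  next
    case (Int a b)
    obtain Na where Na: "openin X Na" "x \<in> Na" "\<forall>y\<in>Na. {x, y} \<in> a"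
      using Int.IH(1) Int.prems by blast
    obtain Nb where Nb: "openin X Nb" "x \<in> Nb" "\<forall>y\<in>Nb. {x, y} \<in> b"
      using Int.IH(2) Int.prems by blast
    show ?case
      using Na Nb by (intro exI[of _ "Na \<inter> Nb"]) auto
  next
    case (UN K)
    obtain k where k: "k \<in> K" "{x} \<in> k" using UN.prems(2) by blast
    obtain N where "openin X N" "x \<in> N" "\<forall>y\<in>N. {x, y} \<in> k"
      using UN.IH[OF k(1) UN.prems(1) k(2)] by blast
    then show ?case using k(1) by blast
  next
    case (Basis s)
    have pair: "{x, y} \<in> Fn_set X n" if "y \<in> topspace X" for y
      using doubleton_in_Fn_set[OF Basis.prems(1) that n] .
    from Basis.hyps consider V where "openin X V" "s = {A \<in> Fn_set X n. A \<subseteq> V}"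
      | V where "openin X V" "s = {A \<in> Fn_set X n. A \<inter> V \<noteq> {}}"
      unfolding Vietoris_subbasis_def by blast
    then show ?case
    proof cases
      case 1
      then have "x \<in> V" "V \<subseteq> topspace X" using Basis.prems(2) openin_subset by auto
      then show ?thesis using 1 pair by (intro exI[of _ V]) auto
    next
      case 2
      then have "x \<in> V" using Basis.prems(2) by auto
      then show ?thesis using 2 pair Basis.prems(1) by (intro exI[of _ "topspace X"]) auto
    qed
  qed
qed

lemma openin_Fn_not_subset_F1_set:
  assumes perfect: "\<forall>x\<in>topspace X. \<not> openin X {x}" and n: "n \<ge> 2"
    and U: "openin (Fn X n) U" "U \<noteq> {}"
  shows "\<not> U \<subseteq> F1_set X"
proof
  assume sub: "U \<subseteq> F1_set X"
  obtain x where x: "x \<in> topspace X" "{x} \<in> U"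
    using U(2) sub unfolding F1_set_def by blast
  obtain N where N: "openin X N" "x \<in> N" "\<forall>y\<in>N. {x, y} \<in> U"
    using openin_Fn_contains_doubletons[OF U(1) n x] by blast
  have "N \<noteq> {x}" using N(1) perfect x(1) by blast
  then obtain y where "y \<in> N" "y \<noteq> x" using N(2) by blast
  then have "{x, y} \<in> U" "{x, y} \<notin> F1_set X"
    using N(3) unfolding F1_set_def by (auto simp: doubleton_eq_iff)
  then show False using sub by blast
qed

lemma openin_Fn_minus_F1_set:
  assumes "Hausdorff_space X"
  shows "openin (Fn X n) (Fn_set X n - F1_set X)"
proof (subst openin_subopen, intro ballI)
  fix A assume A: "A \<in> Fn_set X n - F1_set X"
  then have A': "A \<subseteq> topspace X" "A \<noteq> {}" "A \<notin> F1_set X"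
    unfolding Fn_set_def by auto
  then obtain a where a: "a \<in> A" by blast
  have "\<exists>b\<in>A. b \<noteq> a"
  proof (rule ccontr)
    assume "\<not> ?thesis"
    then have "A = {a}" using a by blast
    then show False using A' a by (auto simp: F1_set_def)
  qed
  then obtain b where b: "b \<in> A" "b \<noteq> a" by blast
  have "a \<in> topspace X" "b \<in> topspace X" using a b A' by auto
  then obtain Ua Ub where UU: "openin X Ua" "openin X Ub" "a \<in> Ua" "b \<in> Ub" "disjnt Ua Ub"
    using assms b(2) unfolding Hausdorff_space_def by metis
  let ?N = "{B \<in> Fn_set X n. B \<inter> Ua \<noteq> {}} \<inter> {B \<in> Fn_set X n. B \<inter> Ub \<noteq> {}}"
  have "openin (Fn X n) ?N"
    using openin_Fn_meets UU by (intro openin_Int) auto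
  moreover have "A \<in> ?N" using A a b UU by auto
  moreover have "?N \<subseteq> Fn_set X n - F1_set X"
    using UU(5) unfolding F1_set_def disjnt_def by (force simp: disjoint_iff)
  ultimately show "\<exists>T. openin (Fn X n) T \<and> A \<in> T \<and> T \<subseteq> Fn_set X n - F1_set X" by blast
qed

section \<open>The quotient \<open>SF\<^sub>n(X)\<close>\<close>

lemma openin_SFn:
  "openin (SFn X n) W \<longleftrightarrow>
     W \<subseteq> SFq X ` Fn_set X n \<and> openin (Fn X n) {A \<in> Fn_set X n. SFq X A \<in> W}"
  unfolding SFn_def topology_inverse'[OF istopology_SFn] by (simp only: topspace_Fn)

lemma topspace_SFn: "topspace (SFn X n) = SFq X ` Fn_set X n"
proof (rule subset_antisym)
  show "topspace (SFn X n) \<subseteq> SFq X ` Fn_set X n"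
    using openin_topspace[of "SFn X n"] unfolding openin_SFn by (rule conjunct1)
  have "{A \<in> Fn_set X n. SFq X A \<in> SFq X ` Fn_set X n} = topspace (Fn X n)"
    unfolding topspace_Fn by blast
  then have "openin (SFn X n) (SFq X ` Fn_set X n)"
    unfolding openin_SFn by simp
  then show "SFq X ` Fn_set X n \<subseteq> topspace (SFn X n)"
    by (rule openin_subset)
qed

lemma continuous_map_SFq: "continuous_map (Fn X n) (SFn X n) (SFq X)"
  unfolding continuous_map_def topspace_Fn topspace_SFn openin_SFn by blast

lemma SFq_eq_F1_set_iff:
  assumes nondeg: "\<exists>x\<in>topspace X. \<exists>y\<in>topspace X. x \<noteq> y"
  shows "SFq X A = F1_set X \<longleftrightarrow> A \<in> F1_set X"
proof -
  obtain x y where "x \<in> topspace X" "y \<in> topspace X" "x \<noteq> y"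
    using nondeg by blast
  then have "{x} \<in> F1_set X" "{y} \<in> F1_set X" "{x} \<noteq> {y}"
    unfolding F1_set_def by auto
  then have "F1_set X \<noteq> {A}" by auto
  then show ?thesis unfolding SFq_def by auto
qed

lemma SFn_map_SFq:
  assumes nondeg: "\<exists>x\<in>topspace X. \<exists>y\<in>topspace X. x \<noteq> y"
    and f: "f ` topspace X \<subseteq> topspace X"
  shows "SFn_map X f (SFq X A) = SFq X (Fn_map f A)"
proof (cases "A \<in> F1_set X")
  case True
  then obtain x where "A = {x}" "x \<in> topspace X" unfolding F1_set_def by blast
  then have "Fn_map f A \<in> F1_set X" using f unfolding Fn_map_def F1_set_def by auto
  then show ?thesis
    using True unfolding SFn_map_def SFq_def by simp
next
  case False
  then show ?thesis
    using SFq_eq_F1_set_iff[OF nondeg, of A] unfolding SFn_map_def by (simp add: SFq_def)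
qed

lemma SFq_preimage_image:
  assumes nondeg: "\<exists>x\<in>topspace X. \<exists>y\<in>topspace X. x \<noteq> y"
    and U: "U \<subseteq> Fn_set X n" "U \<inter> F1_set X = {}"
  shows "{A \<in> Fn_set X n. SFq X A \<in> SFq X ` U} = U"
proof -
  have "A \<in> U" if "A \<in> Fn_set X n" "B \<in> U" "SFq X A = SFq X B" for A B
  proof -
    have "B \<notin> F1_set X" using that(2) U(2) by blast
    then have "SFq X B = {B}" unfolding SFq_def by simp
    moreover have "A \<notin> F1_set X"
      using that(3) \<open>B \<notin> F1_set X\<close> SFq_eq_F1_set_iff[OF nondeg] by metis
    then have "SFq X A = {A}" unfolding SFq_def by simp
    ultimately show "A \<in> U" using that(2,3) by simp
  qed
  then show ?thesis using U(1) by blast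
qed

section \<open>TT++ for \<open>F\<^sub>n(f)\<close>, \<open>SF\<^sub>n(f)\<close> and \<open>f\<close>\<close>

lemma TTpp_Fn_imp_TTpp:
  assumes n: "n \<ge> 1" and TT: "TTpp (Fn X n) (Fn_map f)"
  shows "TTpp X f"
  unfolding TTpp_def
proof (intro allI impI)
  fix U V assume U: "openin X U" and V: "openin X V" and ne: "U \<noteq> {}" "V \<noteq> {}"
  let ?U = "{A \<in> Fn_set X n. A \<subseteq> U}" and ?V = "{A \<in> Fn_set X n. A \<subseteq> V}"
  obtain u v where "u \<in> U" "v \<in> V" using ne by blast
  then have "{u} \<in> ?U" "{v} \<in> ?V"
    using singleton_in_Fn_set[of u X n] singleton_in_Fn_set[of v X n] n
      openin_subset[OF U] openin_subset[OF V] by auto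
  then have "infinite {k. ?U \<inter> {A \<in> topspace (Fn X n). (Fn_map f ^^ k) A \<in> ?V} \<noteq> {}}"
    using TT openin_Fn_subset[OF U] openin_Fn_subset[OF V] unfolding TTpp_def by blast
  moreover have "{k. ?U \<inter> {A \<in> topspace (Fn X n). (Fn_map f ^^ k) A \<in> ?V} \<noteq> {}}
      \<subseteq> {k. U \<inter> {x \<in> topspace X. (f ^^ k) x \<in> V} \<noteq> {}}"
  proof
    fix k assume "k \<in> {k. ?U \<inter> {A \<in> topspace (Fn X n). (Fn_map f ^^ k) A \<in> ?V} \<noteq> {}}"
    then obtain A where A: "A \<in> Fn_set X n" "A \<subseteq> U" "(f ^^ k) ` A \<subseteq> V"
      unfolding Fn_map_funpow by blast
    then obtain a where "a \<in> A" unfolding Fn_set_def by blast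
    then have "a \<in> U \<inter> {x \<in> topspace X. (f ^^ k) x \<in> V}"
      using A openin_subset[OF U] by blast
    then show "k \<in> {k. U \<inter> {x \<in> topspace X. (f ^^ k) x \<in> V} \<noteq> {}}" by blast
  qed
  ultimately show "infinite {k. U \<inter> {x \<in> topspace X. (f ^^ k) x \<in> V} \<noteq> {}}"
    by (rule infinite_super[rotated])
qed

lemma TTpp_Fn_imp_TTpp_SFn:
  assumes nondeg: "\<exists>x\<in>topspace X. \<exists>y\<in>topspace X. x \<noteq> y"
    and f: "f ` topspace X \<subseteq> topspace X" and TT: "TTpp (Fn X n) (Fn_map f)"
  shows "TTpp (SFn X n) (SFn_map X f)"
proof (rule TTpp_factor[OF continuous_map_SFq _ _ _ TT])
  show "SFq X ` topspace (Fn X n) = topspace (SFn X n)"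
    unfolding topspace_Fn topspace_SFn ..
  show "Fn_map f ` topspace (Fn X n) \<subseteq> topspace (Fn X n)"
    unfolding topspace_Fn by (rule Fn_map_Fn_set[OF f])
  show "\<forall>A\<in>topspace (Fn X n). SFq X (Fn_map f A) = SFn_map X f (SFq X A)"
    using SFn_map_SFq[OF nondeg f] by simp
qed

lemma TTpp_SFn_imp_TTpp_Fn:
  assumes X: "compactum X" and n: "n \<ge> 2" and f: "f ` topspace X \<subseteq> topspace X"
    and TT: "TTpp (SFn X n) (SFn_map X f)"
  shows "TTpp (Fn X n) (Fn_map f)"
proof (rule TTpp_lift[OF _ _ _ _ TT])
  have nondeg: "\<exists>x\<in>topspace X. \<exists>y\<in>topspace X. x \<noteq> y"
    using X unfolding compactum_def by blast
  show "topspace (SFn X n) \<subseteq> SFq X ` topspace (Fn X n)"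
    unfolding topspace_Fn topspace_SFn ..
  show "Fn_map f ` topspace (Fn X n) \<subseteq> topspace (Fn X n)"
    unfolding topspace_Fn by (rule Fn_map_Fn_set[OF f])
  show "\<forall>A\<in>topspace (Fn X n). SFq X (Fn_map f A) = SFn_map X f (SFq X A)"
    using SFn_map_SFq[OF nondeg f] by simp
  fix U assume U: "openin (Fn X n) U" "U \<noteq> {}"
  let ?U' = "U - F1_set X"
  have "?U' = U \<inter> (Fn_set X n - F1_set X)"
    using openin_subset[OF U(1)] unfolding topspace_Fn by blast
  then have "openin (Fn X n) ?U'"
    using openin_Int[OF U(1) openin_Fn_minus_F1_set] X unfolding compactum_def by simp
  moreover have "?U' \<noteq> {}"
    using openin_Fn_not_subset_F1_set[OF _ n U] X unfolding compactum_def by blast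
  moreover have U': "?U' \<subseteq> Fn_set X n" "?U' \<inter> F1_set X = {}"
    using openin_subset[OF U(1)] unfolding topspace_Fn by blast+
  ultimately have "openin (SFn X n) (SFq X ` ?U')" "SFq X ` ?U' \<noteq> {}"
    unfolding openin_SFn SFq_preimage_image[OF nondeg U'] by blast+
  moreover have "{A \<in> topspace (Fn X n). SFq X A \<in> SFq X ` ?U'} \<subseteq> U"
    unfolding topspace_Fn SFq_preimage_image[OF nondeg U'] by blast
  ultimately show "\<exists>V. openin (SFn X n) V \<and> V \<noteq> {} \<and> {A \<in> topspace (Fn X n). SFq X A \<in> V} \<subseteq> U"
    by blast
qed

lemma not_TTpp_Fn_if_no_joint_visits:
  assumes n: "n \<ge> 2"
    and U1: "openin X U1" "U1 \<noteq> {}" and U2: "openin X U2" "U2 \<noteq> {}"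
    and V: "openin X V" "V \<noteq> {}"
    and apart: "\<And>k a b. a \<in> U1 \<Longrightarrow> b \<in> U2 \<Longrightarrow> (f ^^ k) a \<in> V \<Longrightarrow> (f ^^ k) b \<notin> V"
  shows "\<not> TTpp (Fn X n) (Fn_map f)"
proof
  assume TT: "TTpp (Fn X n) (Fn_map f)"
  let ?U = "{A \<in> Fn_set X n. A \<inter> U1 \<noteq> {}} \<inter> {A \<in> Fn_set X n. A \<inter> U2 \<noteq> {}}"
  let ?V = "{A \<in> Fn_set X n. A \<subseteq> V}"
  obtain a b v where abv: "a \<in> U1" "b \<in> U2" "v \<in> V"
    using U1(2) U2(2) V(2) by blast
  then have "a \<in> topspace X" "b \<in> topspace X" "v \<in> topspace X"
    using openin_subset U1(1) U2(1) V(1) by blast+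
  then have "{a, b} \<in> ?U" "{v} \<in> ?V"
    using abv doubleton_in_Fn_set[of a X b n] singleton_in_Fn_set[of v X n] n by auto
  moreover have "openin (Fn X n) ?U"
    by (intro openin_Int openin_Fn_meets U1(1) U2(1))
  moreover have "openin (Fn X n) ?V"
    by (rule openin_Fn_subset[OF V(1)])
  ultimately have "infinite {k. ?U \<inter> {A \<in> topspace (Fn X n). (Fn_map f ^^ k) A \<in> ?V} \<noteq> {}}"
    using TT unfolding TTpp_def by blast
  moreover have "?U \<inter> {A \<in> topspace (Fn X n). (Fn_map f ^^ k) A \<in> ?V} = {}" for k
  proof -
    have "\<not> (f ^^ k) ` A \<subseteq> V" if "A \<inter> U1 \<noteq> {}" "A \<inter> U2 \<noteq> {}" for A
      using that apart by blast
    then show ?thesis unfolding Fn_map_funpow by blast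
  qed
  ultimately show False by simp
qed

section \<open>An irrational rotation of the unit interval\<close>

text \<open>Discontinuous at \<open>1 - frac \<theta>\<close>, which is harmless: the theorem only asks for a self-map.\<close>
definition rot :: "real \<Rightarrow> real \<Rightarrow> real" where
  "rot \<theta> x = frac (x + \<theta>)"

lemma rot_image: "rot \<theta> ` {0..1} \<subseteq> {0..1}"
  unfolding rot_def by (auto simp: frac_ge_0 less_imp_le[OF frac_lt_1])

lemma rot_funpow_shift: "(rot \<theta> ^^ k) x - x - real k * \<theta> \<in> \<int>"
proof (induction k)
  case 0
  then show ?case by simp
next
  case (Suc k)
  have "(rot \<theta> ^^ Suc k) x - x - real (Suc k) * \<theta> =
        ((rot \<theta> ^^ k) x - x - real k * \<theta>) - of_int \<lfloor>(rot \<theta> ^^ k) x + \<theta>\<rfloor>"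
    by (simp add: rot_def frac_def algebra_simps)
  also have "\<dots> \<in> \<int>" by (rule Ints_diff[OF Suc Ints_of_int])
  finally show ?case .
qed

lemma rot_funpow_eqI:
  assumes x: "x \<in> {0..1}" and y: "0 < y" "y < 1" and shift: "x + real k * \<theta> - y \<in> \<int>"
  shows "(rot \<theta> ^^ k) x = y"
proof -
  have "(rot \<theta> ^^ k) x - y = ((rot \<theta> ^^ k) x - x - real k * \<theta>) + (x + real k * \<theta> - y)"
    by simp
  also have "\<dots> \<in> \<int>" by (rule Ints_add[OF rot_funpow_shift shift])
  finally have "(rot \<theta> ^^ k) x - y \<in> \<int>" .
  moreover have "(rot \<theta> ^^ k) x \<in> {0..1}" by (rule funpow_in_closed[OF rot_image x])
  then have "\<bar>(rot \<theta> ^^ k) x - y\<bar> < 1" using y by auto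
  ultimately show ?thesis using Ints_nonzero_abs_less1 by force
qed

lemma irrational_multiple_near:
  assumes "\<theta> \<notin> \<rat>" "\<epsilon> > 0"
  shows "\<exists>k>N. \<exists>h::int. \<bar>real k * \<theta> - of_int h - c\<bar> < \<epsilon>"
proof -
  have "real (Suc N) * \<theta> \<notin> \<rat>"
  proof
    assume "real (Suc N) * \<theta> \<in> \<rat>"
    then have "real (Suc N) * \<theta> / real (Suc N) \<in> \<rat>" by (intro Rats_divide) auto
    then show False using assms(1) by simp
  qed
  then obtain h j where hj: "j > 0" "\<bar>of_int j * (real (Suc N) * \<theta>) - of_int h - c\<bar> < \<epsilon>"
    using sequence_of_fractional_parts_is_dense[OF _ assms(2)] by metis
  define k where "k = nat j * Suc N"
  have "1 * Suc N \<le> nat j * Suc N" using hj(1) by (intro mult_le_mono1) simp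
  then have "N < nat j * Suc N" by simp
  then have "k > N" unfolding k_def .
  moreover have "real k * \<theta> = of_int j * (real (Suc N) * \<theta>)"
    using hj(1) unfolding k_def by (simp add: algebra_simps)
  ultimately show ?thesis using hj(2) by metis
qed

lemma openin_unit_interval_contains_interval:
  assumes U: "openin (top_of_set {0..1::real}) U" and u: "u \<in> U"
  obtains a d where "0 < d" "0 \<le> a" "a + d \<le> 1" "{a<..<a+d} \<subseteq> U"
proof -
  obtain T where T: "open T" "U = T \<inter> {0..1}" using U by (auto simp: openin_open)
  then obtain e where e: "e > 0" "ball u e \<subseteq> T" using u open_contains_ball by blast
  define d where "d = min e (1/2)"
  have d: "d > 0" "d \<le> e" "d \<le> 1/2" using e unfolding d_def by auto
  have u01: "0 \<le> u" "u \<le> 1" using u T by auto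
  define a where "a = (if u \<le> 1/2 then u else u - d)"
  have "{a<..<a+d} \<subseteq> ball u e \<inter> {0..1}"
    using d u01 unfolding a_def by (auto simp: dist_real_def)
  then have "{a<..<a+d} \<subseteq> U" using e T by blast
  moreover have "0 \<le> a" "a + d \<le> 1" using d u01 unfolding a_def by auto
  ultimately show ?thesis using that d by blast
qed

lemma TTpp_rot:
  assumes irr: "\<theta> \<notin> \<rat>"
  shows "TTpp (top_of_set {0..1}) (rot \<theta>)"
  unfolding TTpp_def
proof (intro allI impI)
  fix U V :: "real set"
  assume U: "openin (top_of_set {0..1}) U" and V: "openin (top_of_set {0..1}) V"
    and ne: "U \<noteq> {}" "V \<noteq> {}"
  obtain a d where ad: "0 < d" "0 \<le> a" "a + d \<le> 1" "{a<..<a+d} \<subseteq> U"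
    using openin_unit_interval_contains_interval[OF U] ne by blast
  obtain b e where be: "0 < e" "0 \<le> b" "b + e \<le> 1" "{b<..<b+e} \<subseteq> V"
    using openin_unit_interval_contains_interval[OF V] ne by blast
  define \<delta> where "\<delta> = min d e"
  have \<delta>: "\<delta> > 0" "\<delta> \<le> d" "\<delta> \<le> e" using ad be unfolding \<delta>_def by auto
  show "infinite {k. U \<inter> {x \<in> topspace (top_of_set {0..1}). (rot \<theta> ^^ k) x \<in> V} \<noteq> {}}"
    unfolding infinite_nat_iff_unbounded
  proof
    fix N
    obtain k h where kh: "k > N" "\<bar>real k * \<theta> - of_int h - (b - a)\<bar> < \<delta>/4"
      using irrational_multiple_near[OF irr, of "\<delta>/4" N "b - a"] \<delta> by auto
    define x where "x = a + \<delta>/2"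
    define y where "y = x + real k * \<theta> - of_int h"
    have x: "x \<in> U" "x \<in> {0..1}" using ad \<delta> unfolding x_def by auto
    have y: "b < y" "y < b + e" using kh(2) \<delta> unfolding y_def x_def abs_less_iff by linarith+
    have "(rot \<theta> ^^ k) x = y"
      using y be by (intro rot_funpow_eqI[OF x(2)]) (auto simp: y_def)
    then have "x \<in> U \<inter> {x \<in> topspace (top_of_set {0..1}). (rot \<theta> ^^ k) x \<in> V}"
      using x y be by auto
    then show "\<exists>k>N. k \<in> {k. U \<inter> {x \<in> topspace (top_of_set {0..1}). (rot \<theta> ^^ k) x \<in> V} \<noteq> {}}"
      using kh(1) by blast
  qed
qed

lemma rot_funpow_separates:
  assumes a: "a \<in> {1/5<..<3/10}" and b: "b \<in> {7/10<..<4/5}"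
    and ka: "(rot \<theta> ^^ k) a \<in> {2/5<..<3/5}"
  shows "(rot \<theta> ^^ k) b \<notin> {2/5<..<3/5}"
proof
  assume kb: "(rot \<theta> ^^ k) b \<in> {2/5<..<3/5}"
  define z where "z = ((rot \<theta> ^^ k) a - a - real k * \<theta>) - ((rot \<theta> ^^ k) b - b - real k * \<theta>)"
  have "z \<in> \<int>" unfolding z_def by (intro Ints_diff rot_funpow_shift)
  moreover have "0 < z" "z < 1" using a b ka kb unfolding z_def by auto
  ultimately show False using Ints_nonzero_abs_less1[of z] by simp
qed

lemma compactum_unit_interval: "compactum (top_of_set {0..1::real})"
  unfolding compactum_def
proof (intro conjI ballI notI)
  show "compact_space (top_of_set {0..1::real})"
    by (rule compact_space_subtopology) simp
  show "Hausdorff_space (top_of_set {0..1::real})"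
    by (rule Hausdorff_space_subtopology) simp
  fix x assume "openin (top_of_set {0..1}) {x::real}"
  then obtain a d where d: "0 < d" "{a<..<a+d} \<subseteq> {x}"
    using openin_unit_interval_contains_interval by blast
  then have "a + d/3 \<in> {a<..<a+d}" "a + 2*d/3 \<in> {a<..<a+d}" by auto
  then have "a + d/3 = x" "a + 2*d/3 = x" using d(2) by blast+
  then show False using d(1) by simp
next
  show "\<exists>x\<in>topspace (top_of_set {0..1::real}). \<exists>y\<in>topspace (top_of_set {0..1::real}). x \<noteq> y"
    by (intro bexI[of _ 0] bexI[of _ 1]) auto
qed

lemma compactum_homeomorphic_image:
  assumes h: "homeomorphic_map X Y h" and X: "compactum X"
  shows "compactum Y"
  unfolding compactum_def
proof (intro conjI ballI notI)
  have XY: "X homeomorphic_space Y"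
    using h by (rule homeomorphic_map_imp_homeomorphic_space)
  show "compact_space Y"
    using X homeomorphic_compact_space[OF XY] unfolding compactum_def by blast
  show "Hausdorff_space Y"
    using X homeomorphic_Hausdorff_space[OF XY] unfolding compactum_def by blast
next
  have surj: "h ` topspace X = topspace Y"
    using h by (rule homeomorphic_imp_surjective_map)
  fix y assume "y \<in> topspace Y" "openin Y {y}"
  then obtain x where x: "x \<in> topspace X" "y = h x" using surj by blast
  then have "openin Y (h ` {x})" using \<open>openin Y {y}\<close> by simp
  then have "openin X {x}" using homeomorphic_map_openness[OF h, of "{x}"] x(1) by simp
  then show False using X x(1) unfolding compactum_def by blast
next
  obtain x x' where "x \<in> topspace X" "x' \<in> topspace X" "x \<noteq> x'"
    using X unfolding compactum_def by blast
  then show "\<exists>y\<in>topspace Y. \<exists>y'\<in>topspace Y. y \<noteq> y'"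
    using homeomorphic_imp_injective_map[OF h] homeomorphic_imp_surjective_map[OF h]
    by (metis image_eqI inj_onD)
qed

text \<open>The counterexample must live on the type \<open>real set\<close>, so [0,1] is realised on the singletons.\<close>
definition singleton_interval :: "real set topology" where
  "singleton_interval = pullback_topology ((\<lambda>x. {x}) ` {0..1}) the_elem (top_of_set {0..1})"

lemma homeomorphic_map_singleton_interval:
  "homeomorphic_map (top_of_set {0..1}) singleton_interval (\<lambda>x. {x})"
proof (rule homeomorphic_maps_imp_map)
  show "homeomorphic_maps (top_of_set {0..1}) singleton_interval (\<lambda>x. {x}) the_elem"
    unfolding homeomorphic_maps_def singleton_interval_def
  proof (intro conjI ballI)
    show "continuous_map (top_of_set {0..1})
        (pullback_topology ((\<lambda>x. {x}) ` {0..1}) the_elem (top_of_set {0..1})) (\<lambda>x. {x::real})"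
      by (rule continuous_map_pullback') (auto simp: o_def)
    show "continuous_map (pullback_topology ((\<lambda>x. {x}) ` {0..1}) the_elem (top_of_set {0..1}))
        (top_of_set {0..1::real}) the_elem"
      using continuous_map_pullback[OF continuous_map_id[of "top_of_set {0..1::real}"],
          of "(\<lambda>x. {x}) ` {0..1}" the_elem] by simp
  qed (auto simp: topspace_pullback_topology)
qed

lemma compactum_singleton_interval: "compactum singleton_interval"
  by (rule compactum_homeomorphic_image[OF homeomorphic_map_singleton_interval compactum_unit_interval])

lemma topspace_singleton_interval: "topspace singleton_interval = (\<lambda>x. {x}) ` {0..1}"
  using homeomorphic_imp_surjective_map[OF homeomorphic_map_singleton_interval] by simp

definition rot_singleton :: "real \<Rightarrow> real set \<Rightarrow> real set" where
  "rot_singleton \<theta> p = {rot \<theta> (the_elem p)}"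

lemma rot_singleton_funpow: "(rot_singleton \<theta> ^^ k) {x} = {(rot \<theta> ^^ k) x}"
  by (induction k) (simp_all add: rot_singleton_def)

lemma rot_singleton_maps: "rot_singleton \<theta> ` topspace singleton_interval \<subseteq> topspace singleton_interval"
  unfolding topspace_singleton_interval
proof (rule image_subsetI)
  fix p assume "p \<in> (\<lambda>x. {x}) ` {0..1::real}"
  then obtain x where "x \<in> {0..1}" "p = {x}" by blast
  then have "rot \<theta> x \<in> {0..1}" using rot_image by blast
  then show "rot_singleton \<theta> p \<in> (\<lambda>x. {x}) ` {0..1}"
    using \<open>p = {x}\<close> by (simp add: rot_singleton_def image_iff)
qed

lemma TTpp_rot_singleton:
  assumes "\<theta> \<notin> \<rat>"
  shows "TTpp singleton_interval (rot_singleton \<theta>)"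
proof (rule TTpp_factor[OF _ _ _ _ TTpp_rot[OF assms]])
  show "continuous_map (top_of_set {0..1}) singleton_interval (\<lambda>x. {x})"
    by (rule homeomorphic_imp_continuous_map[OF homeomorphic_map_singleton_interval])
  show "(\<lambda>x. {x}) ` topspace (top_of_set {0..1}) = topspace singleton_interval"
    by (rule homeomorphic_imp_surjective_map[OF homeomorphic_map_singleton_interval])
  show "rot \<theta> ` topspace (top_of_set {0..1}) \<subseteq> topspace (top_of_set {0..1})"
    using rot_image by simp
  show "\<forall>x\<in>topspace (top_of_set {0..1}). {rot \<theta> x} = rot_singleton \<theta> {x}"
    by (simp add: rot_singleton_def)
qed

lemma not_TTpp_Fn_rot_singleton: "\<not> TTpp (Fn singleton_interval 2) (Fn_map (rot_singleton \<theta>))"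
proof -
  let ?I = "\<lambda>a b::real. (\<lambda>x. {x}) ` {a<..<b}"
  have open_I: "openin singleton_interval (?I a b)" if "0 \<le> a" "b \<le> 1" for a b
  proof -
    have "openin (top_of_set {0..1}) {a<..<b}" using that by (intro open_subset) auto
    then show ?thesis using that
      by (subst homeomorphic_map_openness[OF homeomorphic_map_singleton_interval]) auto
  qed
  have opens: "openin singleton_interval (?I (1/5) (3/10))" "openin singleton_interval (?I (7/10) (4/5))"
    "openin singleton_interval (?I (2/5) (3/5))"
    by (rule open_I; simp)+
  have nonempty: "?I (1/5) (3/10) \<noteq> {}" "?I (7/10) (4/5) \<noteq> {}" "?I (2/5) (3/5) \<noteq> {}"
    by simp_all
  have apart: "(rot_singleton \<theta> ^^ k) b \<notin> ?I (2/5) (3/5)"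
    if ab: "a \<in> ?I (1/5) (3/10)" "b \<in> ?I (7/10) (4/5)"
      and ka: "(rot_singleton \<theta> ^^ k) a \<in> ?I (2/5) (3/5)"
    for k a b
  proof -
    obtain a' b' where a': "a' \<in> {1/5<..<3/10}" "a = {a'}" and b': "b' \<in> {7/10<..<4/5}" "b = {b'}"
      using ab by blast
    have "(rot \<theta> ^^ k) a' \<in> {2/5<..<3/5}"
      using ka unfolding a'(2) rot_singleton_funpow by blast
    then have "(rot \<theta> ^^ k) b' \<notin> {2/5<..<3/5}"
      by (rule rot_funpow_separates[OF a'(1) b'(1)])
    then show ?thesis
      unfolding b'(2) rot_singleton_funpow by blast
  qed
  show ?thesis
    by (rule not_TTpp_Fn_if_no_joint_visits[OF order_refl opens(1) nonempty(1) opens(2) nonempty(2)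
          opens(3) nonempty(3) apart])
qed

theorem theorem20:
  shows "(\<forall>(X :: 'a topology) (n::nat) f.
            compactum X \<longrightarrow> n \<ge> 2 \<longrightarrow> f ` topspace X \<subseteq> topspace X \<longrightarrow>
              (TTpp (Fn X n) (Fn_map f) \<longleftrightarrow> TTpp (SFn X n) (SFn_map X f)) \<and>
              (TTpp (Fn X n) (Fn_map f) \<longrightarrow> TTpp X f))
       \<and> (\<exists>(X :: real set topology) (n::nat) f.
            compactum X \<and> n \<ge> 2 \<and> f ` topspace X \<subseteq> topspace X \<and>
            TTpp X f \<and> \<not> TTpp (Fn X n) (Fn_map f))"
proof
  show "\<forall>(X :: 'a topology) (n::nat) f.
            compactum X \<longrightarrow> n \<ge> 2 \<longrightarrow> f ` topspace X \<subseteq> topspace X \<longrightarrow>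
              (TTpp (Fn X n) (Fn_map f) \<longleftrightarrow> TTpp (SFn X n) (SFn_map X f)) \<and>
              (TTpp (Fn X n) (Fn_map f) \<longrightarrow> TTpp X f)"
  proof (intro allI impI conjI iffI)
    fix X :: "'a topology" and n :: nat and f
    assume X: "compactum X" and n: "n \<ge> 2" and f: "f ` topspace X \<subseteq> topspace X"
    have nondeg: "\<exists>x\<in>topspace X. \<exists>y\<in>topspace X. x \<noteq> y"
      using X unfolding compactum_def by blast
    show "TTpp (SFn X n) (SFn_map X f)" if "TTpp (Fn X n) (Fn_map f)"
      using TTpp_Fn_imp_TTpp_SFn[OF nondeg f that] .
    show "TTpp (Fn X n) (Fn_map f)" if "TTpp (SFn X n) (SFn_map X f)"
      using TTpp_SFn_imp_TTpp_Fn[OF X n f that] .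
    show "TTpp X f" if "TTpp (Fn X n) (Fn_map f)"
      using TTpp_Fn_imp_TTpp[OF _ that] n by simp
  qed
  have "\<not> (UNIV :: real set) \<subseteq> \<rat>"
    using countable_subset[OF _ countable_rat] uncountable_UNIV_real by blast
  then obtain \<theta> :: real where "\<theta> \<notin> \<rat>" by blast
  then show "\<exists>(X :: real set topology) (n::nat) f.
            compactum X \<and> n \<ge> 2 \<and> f ` topspace X \<subseteq> topspace X \<and>
            TTpp X f \<and> \<not> TTpp (Fn X n) (Fn_map f)"
    by (intro exI[of _ singleton_interval] exI[of _ "2::nat"] exI[of _ "rot_singleton \<theta>"] conjI
        order_refl compactum_singleton_interval rot_singleton_maps TTpp_rot_singleton
        not_TTpp_Fn_rot_singleton)
qed

end
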